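(* Let $u\in\mathbb{R}^m$. If there exists $b\in\mathbb{R}^p$ with $\mathcal{P}(b)\neq\emptyset$ such that $\max_{x\in\mathcal{P}(b)} Kg(x,u)\le b$ (the maximum taken componentwise), then $u$ is solvable, and there is $x\in\mathcal{P}(b)$ with $f(x,u)=0$.
   Context: Let $f:\mathbb{R}^n\times\mathbb{R}^m\to\mathbb{R}^n$ be continuous and differentiable, and suppose there are a continuously differentiable map $\psi:\mathbb{R}^n\times\mathbb{R}^m\to\mathbb{R}^q$ and a constant matrix $M\in\mathbb{R}^{n\times q}$ with $f=M\psi$. There is a base point $(x_0,u_0)$ with $f(x_0,u_0)=0$ at which $J_{f,0}=\frac{\partial f}{\partial x}\big|_{(x_0,u_0)}$ is nonsingular. Let $J_{\psi,0}=\frac{\partial \psi}{\partial x}\big|_{(x_0,u_0)}\in\mathbb{R}^{q\times n}$ and $g(x,u)=\psi(x,u)-J_{\psi,0}x$. A fixed matrix $A\in\mathbb{R}^{p\times n}$ is chosen so that for every $b\in\mathbb{R}^p$ the polytope $\mathcal{P}(b)=\{x: Ax\le b\}$ is bounded. Set $K=-AJ_{f,0}^{-1}M\in\mathbb{R}^{p\times q}$. $u$ is solvable if there is $x$ with $f(x,u)=0$. Vector inequalities are componentwise. *)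

theory Defs
  imports "HOL-Analysis.Analysis"
begin

definition polytope :: "real^'n^'p \<Rightarrow> real^'p \<Rightarrow> (real^'n) set" where
  "polytope A b = {x. \<forall>i. (A *v x) $ i \<le> b $ i}"

definition solvable :: "(real^'n \<Rightarrow> real^'m \<Rightarrow> real^'n) \<Rightarrow> real^'m \<Rightarrow> bool" where
  "solvable f u \<longleftrightarrow> (\<exists>x. f x u = 0)"

end

theory Submission
  imports Defs
begin

text \<open>Write \<open>f = M \<psi>\<close> and split \<open>\<psi>(x, u) = J\<^sub>\<psi> x + g(x, u)\<close>, where \<open>J\<^sub>\<psi>\<close> is the partial
  Jacobian of \<open>\<psi>\<close> at the base point, so that \<open>J\<^sub>f = M J\<^sub>\<psi>\<close>. Then \<open>f(x, u) = 0\<close> is equivalent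
  to the fixed-point equation \<open>x = T x\<close> with \<open>T x = - J\<^sub>f\<^sup>-\<^sup>1 M g(x, u)\<close>. The hypothesis says
  exactly that \<open>A T x \<le> b\<close> on \<open>P(b)\<close>, i.e. that \<open>T\<close> maps the nonempty compact convex
  polytope \<open>P(b)\<close> into itself, so Brouwer's theorem yields the fixed point.\<close>

lemma matrix_vector_mult_uminus_right:
  fixes A :: "'a::ring_1^'n^'m" shows "A *v (- x) = - (A *v x)"
  by (vector matrix_vector_mult_def sum_negf)

lemma matrix_vector_mult_uminus_left:
  fixes A :: "'a::ring_1^'n^'m" shows "(- A) *v x = - (A *v x)"
  by (vector matrix_vector_mult_def sum_negf)

lemma closed_polytope:
  fixes A :: "real^'n^'p" shows "closed (polytope A b)"
proof -
  have "polytope A b = (\<Inter>i. {x. (A *v x) $ i \<le> b $ i})"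
    unfolding polytope_def by auto
  moreover have "closed {x. (A *v x) $ i \<le> b $ i}" for i
    by (intro closed_Collect_le continuous_intros
        continuous_on_compose2[OF linear_continuous_on[OF matrix_vector_mul_bounded_linear]]) auto
  ultimately show ?thesis by auto
qed

lemma convex_polytope:
  fixes A :: "real^'n^'p" shows "convex (polytope A b)"
  unfolding convex_def polytope_def
proof clarify
  fix x y :: "real^'n" and s t :: real and i
  assume x: "\<forall>i. (A *v x) $ i \<le> b $ i" and y: "\<forall>i. (A *v y) $ i \<le> b $ i"
    and st: "0 \<le> s" "0 \<le> t" "s + t = 1"
  have "(A *v (s *\<^sub>R x + t *\<^sub>R y)) $ i = s * (A *v x) $ i + t * (A *v y) $ i"
    by (simp add: matrix_vector_right_distrib matrix_vector_mult_scaleR)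
  also have "\<dots> \<le> s * b $ i + t * b $ i"
    using st x y by (intro add_mono mult_left_mono) auto
  also have "\<dots> = b $ i"
    using st by (metis distrib_right mult_1)
  finally show "(A *v (s *\<^sub>R x + t *\<^sub>R y)) $ i \<le> b $ i" .
qed

lemma compact_polytope:
  fixes A :: "real^'n^'p" shows "bounded (polytope A b) \<Longrightarrow> compact (polytope A b)"
  using closed_polytope by (simp add: compact_eq_bounded_closed)

lemma matrix_inv_right:
  fixes J :: "real^'n^'n" shows "invertible J \<Longrightarrow> J ** matrix_inv J = mat 1"
  unfolding invertible_def matrix_inv_def by (rule someI_ex[THEN conjunct1])

lemma polytope_has_zero_of_linearization:
  fixes \<Phi> :: "real^'n \<Rightarrow> real^'q" and M :: "real^'q^'n" and Jp :: "real^'n^'q"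
    and A :: "real^'n^'p"
  assumes cont: "continuous_on (polytope A b) \<Phi>"
    and inv: "invertible (M ** Jp)"
    and bdd: "bounded (polytope A b)"
    and nonempty: "polytope A b \<noteq> {}"
    and maps_into: "\<forall>i. \<forall>x\<in>polytope A b.
          ((- (A ** matrix_inv (M ** Jp) ** M)) *v (\<Phi> x - Jp *v x)) $ i \<le> b $ i"
  shows "\<exists>x\<in>polytope A b. M *v \<Phi> x = 0"
proof -
  define P where "P = polytope A b"
  define T where "T = (\<lambda>x. - (matrix_inv (M ** Jp) *v (M *v (\<Phi> x - Jp *v x))))"
  have "continuous_on P T"
    unfolding T_def P_def
    by (intro continuous_intros cont
        continuous_on_compose2[OF linear_continuous_on[OF matrix_vector_mul_bounded_linear]]) auto
  moreover have "T \<in> P \<rightarrow> P"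
  proof
    fix x assume "x \<in> P"
    moreover have "A *v T x = (- (A ** matrix_inv (M ** Jp) ** M)) *v (\<Phi> x - Jp *v x)"
      unfolding T_def
      by (simp add: matrix_vector_mul_assoc matrix_mul_assoc
          matrix_vector_mult_uminus_right matrix_vector_mult_uminus_left)
    ultimately show "T x \<in> P"
      using maps_into unfolding P_def polytope_def by auto
  qed
  ultimately obtain x where "x \<in> P" and fixed: "T x = x"
    using brouwer[OF compact_polytope convex_polytope] bdd nonempty unfolding P_def by blast
  have "(M ** Jp) *v x = - (M *v (\<Phi> x - Jp *v x))"
    using fixed inv unfolding T_def
    by (metis matrix_inv_right[OF inv] matrix_vector_mul_assoc matrix_vector_mul_lid
        matrix_vector_mult_uminus_right)
  then have "M *v \<Phi> x = 0"
    by (simp add: matrix_vector_mult_diff_distrib matrix_vector_mul_assoc[symmetric])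
  with \<open>x \<in> P\<close> show ?thesis unfolding P_def by blast
qed

lemma has_derivative_partial_fst:
  assumes "((\<lambda>z. F (fst z) (snd z)) has_derivative F') (at (x, v))"
  shows "((\<lambda>x. F x v) has_derivative (\<lambda>h. F' (h, 0))) (at x)"
proof -
  have "((\<lambda>x. (x, v)) has_derivative (\<lambda>h. (h, 0))) (at x)"
    by (auto intro!: derivative_eq_intros)
  from has_derivative_compose[OF this assms] show ?thesis
    by (simp add: o_def)
qed

lemma matrix_frechet_derivative_matrix_vector_mult:
  fixes h :: "real^'n \<Rightarrow> real^'q" and M :: "real^'q^'k"
  assumes "(h has_derivative D) (at x)"
  shows "matrix (frechet_derivative (\<lambda>y. M *v h y) (at x))
           = M ** matrix (frechet_derivative h (at x))"
proof -
  have "((\<lambda>y. M *v h y) has_derivative (\<lambda>y. M *v D y)) (at x)"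
    using bounded_linear.has_derivative[OF matrix_vector_mul_bounded_linear assms] .
  then have "matrix (frechet_derivative (\<lambda>y. M *v h y) (at x)) = matrix ((*v) M \<circ> D)"
    by (simp add: frechet_derivative_at[symmetric] o_def)
  also have "\<dots> = M ** matrix D"
    using has_derivative_linear[OF assms] by (simp add: matrix_compose matrix_vector_mul_linear)
  finally show ?thesis
    using frechet_derivative_at[OF assms] by simp
qed

theorem lemma4:
  fixes f :: "real^'n \<Rightarrow> real^'m \<Rightarrow> real^'n"
    and \<psi> :: "real^'n \<Rightarrow> real^'m \<Rightarrow> real^'q"
    and \<psi>' :: "((real^'n) \<times> (real^'m)) \<Rightarrow> (((real^'n) \<times> (real^'m)) \<Rightarrow>\<^sub>L (real^'q))"
    and M :: "real^'q^'n"
    and A :: "real^'n^'p"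
    and x0 :: "real^'n" and u0 :: "real^'m" and u :: "real^'m" and b :: "real^'p"
  assumes f_cont: "continuous_on UNIV (\<lambda>z. f (fst z) (snd z))"
    and f_diff: "\<forall>z. (\<lambda>z. f (fst z) (snd z)) differentiable (at z)"
    and psi_deriv: "\<forall>z. ((\<lambda>z. \<psi> (fst z) (snd z)) has_derivative blinfun_apply (\<psi>' z)) (at z)"
    and psi_C1: "continuous_on UNIV \<psi>'"
    and f_eq: "\<forall>x v. f x v = M *v \<psi> x v"
    and base: "f x0 u0 = 0"
    and Jf_inv: "invertible (matrix (frechet_derivative (\<lambda>x. f x u0) (at x0)))"
    and A_bounded: "\<forall>c. bounded (polytope A c)"
    and P_nonempty: "polytope A b \<noteq> {}"
    and hyp: "\<forall>i. \<forall>x\<in>polytope A b.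
         ((- (A ** matrix_inv (matrix (frechet_derivative (\<lambda>x. f x u0) (at x0))) ** M))
            *v (\<psi> x u - matrix (frechet_derivative (\<lambda>x. \<psi> x u0) (at x0)) *v x)) $ i \<le> b $ i"
  shows "solvable f u \<and> (\<exists>x\<in>polytope A b. f x u = 0)"
proof -
  have psi_partial: "((\<lambda>x. \<psi> x v) has_derivative (\<lambda>h. \<psi>' (x, v) (h, 0))) (at x)" for x v
    using has_derivative_partial_fst psi_deriv by blast
  have Jf: "matrix (frechet_derivative (\<lambda>x. f x u0) (at x0))
              = M ** matrix (frechet_derivative (\<lambda>x. \<psi> x u0) (at x0))"
    using matrix_frechet_derivative_matrix_vector_mult[OF psi_partial] f_eq by simp
  have "continuous_on (polytope A b) (\<lambda>x. \<psi> x u)"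
    using psi_partial
    by (meson differentiable_def differentiable_at_imp_differentiable_on
        differentiable_imp_continuous_on)
  then obtain x where "x \<in> polytope A b" "M *v \<psi> x u = 0"
    using polytope_has_zero_of_linearization[of A b "\<lambda>x. \<psi> x u"] Jf_inv A_bounded P_nonempty hyp
    unfolding Jf by blast
  then show ?thesis
    using f_eq unfolding solvable_def by auto
qed

end
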